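(* Let $L\ge1$ and $\alpha\in(\alpha_{L+1},\alpha_L)$. There exist positive constants $c_1,\dots,c_L$ (depending only on $\alpha$ and $L$) such that for all real numbers $d_1,\dots,d_L$ the system $AS(d_1,\dots,d_L)$ has a unique solution $(l_0,\dots,l_{L+2})$, and this solution satisfies $$d_{L+1}=-d_0(L)-\sum_{k=1}^Lc_kd_k,\qquad d_0=d_0(L)-\sum_{k=1}^Lc_{L+1-k}d_k,$$ where $d_0:=-l_1+\alpha l_2$ and $d_{L+1}:=-\alpha l_L+l_{L+1}$.
   Context: Define $\alpha_1:=+\infty$ and, for $L\ge2$, $\alpha_L:=\dfrac{1}{1+2\cos(\frac{2\pi}{L+2})}$. For real $d_1,\dots,d_L$, the system $AS(d_1,\dots,d_L)$ on the unknown $(l_0,\dots,l_{L+2})\in\mathbb{R}^{L+3}$ is: $l_0=l_{L+2}=0$; $d_j=-\alpha l_{j-1}+l_j-l_{j+1}+\alpha l_{j+2}$ for all $j\in\{1,\dots,L\}$; $\sum_{j=1}^{L+1}l_j=1$. The constant $d_0(L)$ is the value of $-l_1+\alpha l_2$ at the (unique) solution of $AS(0,\dots,0)$; explicitly, with $\omega\in(0,\pi)$ defined by $\cos\omega=\frac{1-\alpha}{2\alpha}$, $d_0(L)=-\alpha\sin(\frac{L+3}{2}\omega)\sin(\frac{\omega}{2})/\sum_{i=1}^{L+1}\sin(\frac{L+2-i}{2}\omega)\sin(\frac{i\omega}{2})$, and $d_0(L)>0$. *)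

theory Defs
  imports Complex_Main
begin

text \<open>alpha_L for L >= 2 (alpha_1 = +infinity is handled separately in the statement).\<close>
definition alphaL :: "nat \<Rightarrow> real" where
  "alphaL L = 1 / (1 + 2 * cos (2 * pi / real (L + 2)))"

text \<open>The system AS(d_1,...,d_L) for parameter alpha; unknowns l_0..l_{L+2}
  represented by a function l :: nat => real (only indices 0..L+2 matter).\<close>
definition AS :: "real \<Rightarrow> nat \<Rightarrow> (nat \<Rightarrow> real) \<Rightarrow> (nat \<Rightarrow> real) \<Rightarrow> bool" where
  "AS \<alpha> L d l \<longleftrightarrow>
     l 0 = 0 \<and> l (L + 2) = 0 \<and>
     (\<forall>j\<in>{1..L}. d j = - \<alpha> * l (j - 1) + l j - l (j + 1) + \<alpha> * l (j + 2)) \<and>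
     (\<Sum>j = 1..L + 1. l j) = 1"

definition d0L :: "real \<Rightarrow> nat \<Rightarrow> real" where
  "d0L \<alpha> L = (THE v. \<exists>l. AS \<alpha> L (\<lambda>_. 0) l \<and> v = - l 1 + \<alpha> * l 2)"

end

theory Submission
  imports Defs
begin

(*
  Write x for half of the angle omega of the paper, so alpha (1 + 2 cos 2x) = 1, and the hypothesis
  on alpha places x in (pi/(L+3), pi/(L+2)).  The equations of AS say that
  m_j = alpha l_(j+1) + (alpha - 1) l_j + alpha l_(j-1) (AS_integral below) has increments m_(j+1) - m_j = d_j, and the
  sequences sin (2jx) and sin (2(L+2-j)x) lie in the kernel of this self-adjoint three-term operator.
  Summation by parts against them and against the constant 1 gives three linear relations between
  m_1, l_1 and l_(L+1) whose trigonometric coefficients have definite signs.  For d = 0 they force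
  m_1 = l_1 = 0 and hence l = 0, which is uniqueness; existence follows by shooting from (l_1, m_1),
  a 2x2 system that is invertible by uniqueness.  By linearity the solution is l^0 + sum_k d_k u^k
  for unit responses u^k, so c_k = alpha u^k_L - u^k_(L+1); its positivity is a sign computation
  with the same three relations, and the reflection j -> L+2-j yields the second formula.
*)

section \<open>The system with prescribed total\<close>

text \<open>Replacing the normalisation \<open>\<Sum> l = 1\<close> by an arbitrary total \<open>s\<close> makes the solutions
  closed under linear combinations.\<close>
definition AS_with_total :: "real \<Rightarrow> nat \<Rightarrow> (nat \<Rightarrow> real) \<Rightarrow> real \<Rightarrow> (nat \<Rightarrow> real) \<Rightarrow> bool" where
  "AS_with_total \<alpha> L d s l \<longleftrightarrow> l 0 = 0 \<and> l (L + 2) = 0 \<and>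
     (\<forall>j\<in>{1..L}. d j = - \<alpha> * l (j - 1) + l j - l (j + 1) + \<alpha> * l (j + 2)) \<and>
     (\<Sum>j = 1..L + 1. l j) = s"

lemma AS_iff_AS_with_total: "AS \<alpha> L d l \<longleftrightarrow> AS_with_total \<alpha> L d 1 l"
  by (simp add: AS_def AS_with_total_def)

lemma AS_with_total_lincomb:
  assumes "AS_with_total \<alpha> L d1 s1 l1" "AS_with_total \<alpha> L d2 s2 l2"
  shows "AS_with_total \<alpha> L (\<lambda>j. a * d1 j + b * d2 j) (a * s1 + b * s2) (\<lambda>j. a * l1 j + b * l2 j)"
proof -
  have e1: "\<forall>j\<in>{1..L}. d1 j = - \<alpha> * l1 (j - 1) + l1 j - l1 (j + 1) + \<alpha> * l1 (j + 2)"
   and e2: "\<forall>j\<in>{1..L}. d2 j = - \<alpha> * l2 (j - 1) + l2 j - l2 (j + 1) + \<alpha> * l2 (j + 2)"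
    using assms unfolding AS_with_total_def by auto
  have "a * d1 j + b * d2 j = - \<alpha> * (a * l1 (j - 1) + b * l2 (j - 1)) + (a * l1 j + b * l2 j)
      - (a * l1 (j + 1) + b * l2 (j + 1)) + \<alpha> * (a * l1 (j + 2) + b * l2 (j + 2))"
    if "j \<in> {1..L}" for j
    unfolding e1[rule_format, OF that] e2[rule_format, OF that] by (simp add: algebra_simps)
  then show ?thesis
    using assms unfolding AS_with_total_def by (auto simp: sum.distrib sum_distrib_left[symmetric])
qed

lemma AS_with_total_add:
  assumes "AS_with_total \<alpha> L d1 s1 l1" "AS_with_total \<alpha> L d2 s2 l2"
  shows "AS_with_total \<alpha> L (\<lambda>j. d1 j + d2 j) (s1 + s2) (\<lambda>j. l1 j + l2 j)"
  using AS_with_total_lincomb[OF assms, of 1 1] by simp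

lemma AS_with_total_diff:
  assumes "AS_with_total \<alpha> L d1 s1 l1" "AS_with_total \<alpha> L d2 s2 l2"
  shows "AS_with_total \<alpha> L (\<lambda>j. d1 j - d2 j) (s1 - s2) (\<lambda>j. l1 j - l2 j)"
  using AS_with_total_lincomb[OF assms, of 1 "-1"] by simp

lemma AS_with_total_scale:
  assumes "AS_with_total \<alpha> L d s l"
  shows "AS_with_total \<alpha> L (\<lambda>j. a * d j) (a * s) (\<lambda>j. a * l j)"
  using AS_with_total_lincomb[OF assms assms, of a 0] by simp

lemma AS_with_total_sum:
  assumes "finite K" "\<forall>k\<in>K. AS_with_total \<alpha> L (D k) (S k) (U k)"
  shows "AS_with_total \<alpha> L (\<lambda>j. \<Sum>k\<in>K. D k j) (\<Sum>k\<in>K. S k) (\<lambda>j. \<Sum>k\<in>K. U k j)"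
  using assms
proof (induction K rule: finite_induct)
  case empty
  then show ?case by (simp add: AS_with_total_def)
next
  case (insert k K)
  then show ?case using AS_with_total_add[of \<alpha> L "D k" "S k" "U k"] by simp
qed

lemma AS_with_total_cong:
  assumes "AS_with_total \<alpha> L d s l" "\<forall>j\<in>{1..L}. d j = d' j"
  shows "AS_with_total \<alpha> L d' s l"
  using assms unfolding AS_with_total_def by auto

lemma AS_with_total_reflect:
  assumes "AS_with_total \<alpha> L d s l"
  shows "AS_with_total \<alpha> L (\<lambda>j. - d (L + 1 - j)) s (\<lambda>j. l (L + 2 - j))"
proof -
  have eq: "\<forall>j\<in>{1..L}. d j = - \<alpha> * l (j - 1) + l j - l (j + 1) + \<alpha> * l (j + 2)"
    and s: "(\<Sum>j = 1..L + 1. l j) = s" and "l 0 = 0" "l (L + 2) = 0"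
    using assms unfolding AS_with_total_def by auto
  have "- d (L + 1 - j) = - \<alpha> * l (L + 2 - (j - 1)) + l (L + 2 - j) - l (L + 2 - (j + 1))
      + \<alpha> * l (L + 2 - (j + 2))" if j: "j \<in> {1..L}" for j
  proof -
    define i where "i = L + 1 - j"
    have "i \<in> {1..L}" using j unfolding i_def by auto
    moreover have "L + 2 - (j - 1) = i + 2" "L + 2 - j = i + 1" "L + 2 - (j + 1) = i"
      "L + 2 - (j + 2) = i - 1"
      using j unfolding i_def by auto
    ultimately show ?thesis using eq unfolding i_def[symmetric] by auto
  qed
  moreover have "(\<Sum>j = 1..L + 1. l (L + 2 - j)) = s"
    using s sum.atLeastAtMost_rev[of l 1 "L + 1"] by simp
  ultimately show ?thesis using \<open>l 0 = 0\<close> \<open>l (L + 2) = 0\<close> unfolding AS_with_total_def by auto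
qed

definition AS_integral :: "real \<Rightarrow> (nat \<Rightarrow> real) \<Rightarrow> nat \<Rightarrow> real" where
  "AS_integral \<alpha> l j = \<alpha> * l (j + 1) + (\<alpha> - 1) * l j + \<alpha> * l (j - 1)"

lemma AS_integral_Suc_diff:
  "AS_integral \<alpha> l (j + 1) - AS_integral \<alpha> l j = - \<alpha> * l (j - 1) + l j - l (j + 1) + \<alpha> * l (j + 2)"
  by (cases j) (simp_all add: AS_integral_def algebra_simps)

lemma AS_integral_eq_partial_sum:
  assumes eqs: "\<forall>j\<in>{1..L}. d j = - \<alpha> * l (j - 1) + l j - l (j + 1) + \<alpha> * l (j + 2)"
    and j: "j \<in> {1..L + 1}"
  shows "AS_integral \<alpha> l j = AS_integral \<alpha> l 1 + (\<Sum>i = 1..<j. d i)"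
proof -
  have "1 \<le> j" "j \<le> L + 1" using j by auto
  then show ?thesis
  proof (induction j rule: nat_induct_at_least)
    case base
    then show ?case by simp
  next
    case (Suc j)
    then have "d j = AS_integral \<alpha> l (j + 1) - AS_integral \<alpha> l j"
      using eqs AS_integral_Suc_diff[of \<alpha> l j] by auto
    then show ?case using Suc by simp
  qed
qed

lemma AS_integral_sum_by_parts:
  "(\<Sum>j = 1..n. AS_integral \<alpha> l j * \<phi> j) = (\<Sum>j = 1..n. l j * AS_integral \<alpha> \<phi> j)
     + \<alpha> * (l (n + 1) * \<phi> n - l n * \<phi> (n + 1)) + \<alpha> * (l 0 * \<phi> 1 - l 1 * \<phi> 0)"
  by (induction n) (simp_all add: AS_integral_def algebra_simps)

lemma AS_integral_sin_eq_0:
  assumes "\<alpha> * (1 + 2 * cos y) = 1" "1 \<le> j"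
  shows "AS_integral \<alpha> (\<lambda>j. sin (c + real j * y)) j = 0"
proof -
  define t where "t = c + real j * y"
  have "c + real (j + 1) * y = t + y" "c + real (j - 1) * y = t - y"
    using assms(2) by (simp_all add: t_def of_nat_diff algebra_simps)
  then have "AS_integral \<alpha> (\<lambda>j. sin (c + real j * y)) j
      = \<alpha> * sin (t + y) + (\<alpha> - 1) * sin t + \<alpha> * sin (t - y)"
    by (simp only: AS_integral_def t_def)
  also have "\<dots> = sin t * (\<alpha> * (1 + 2 * cos y) - 1)"
    by (simp add: sin_add sin_diff algebra_simps)
  finally show ?thesis using assms(1) by simp
qed

fun shoot :: "real \<Rightarrow> (nat \<Rightarrow> real) \<Rightarrow> real \<Rightarrow> real \<Rightarrow> nat \<Rightarrow> real" where
  "shoot \<alpha> d p \<mu> 0 = 0"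
| "shoot \<alpha> d p \<mu> (Suc 0) = p"
| "shoot \<alpha> d p \<mu> (Suc (Suc j)) =
     (\<mu> + (\<Sum>i = 1..j. d i) - (\<alpha> - 1) * shoot \<alpha> d p \<mu> (Suc j) - \<alpha> * shoot \<alpha> d p \<mu> j) / \<alpha>"

lemma shoot_linear:
  "shoot \<alpha> d p \<mu> j = p * shoot \<alpha> (\<lambda>_. 0) 1 0 j + \<mu> * shoot \<alpha> (\<lambda>_. 0) 0 1 j + shoot \<alpha> d 0 0 j"
proof (induction \<alpha> d p \<mu> j rule: shoot.induct)
  case (3 \<alpha> d p \<mu> j)
  show ?case
    by (simp only: shoot.simps 3) (simp add: field_simps add_divide_distrib diff_divide_distrib)
qed auto

lemma shoot_zero: "shoot \<alpha> (\<lambda>_. 0) 0 0 j = 0"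
  by (induction \<alpha> "\<lambda>_::nat. 0::real" "0::real" "0::real" j rule: shoot.induct) auto

lemma AS_integral_shoot:
  assumes "\<alpha> \<noteq> 0"
  shows "AS_integral \<alpha> (shoot \<alpha> d p \<mu>) (Suc j) = \<mu> + (\<Sum>i = 1..j. d i)"
  using assms by (simp add: AS_integral_def field_simps)

lemma shoot_equations:
  assumes "\<alpha> \<noteq> 0" "1 \<le> j"
  shows "d j = - \<alpha> * shoot \<alpha> d p \<mu> (j - 1) + shoot \<alpha> d p \<mu> j - shoot \<alpha> d p \<mu> (j + 1)
    + \<alpha> * shoot \<alpha> d p \<mu> (j + 2)"
proof -
  obtain i where i: "j = Suc i" using assms(2) by (cases j) auto
  show ?thesis
    unfolding AS_integral_Suc_diff[symmetric] unfolding i Suc_eq_plus1[symmetric]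
    using AS_integral_shoot[OF assms(1), of d p \<mu>] by simp
qed

lemma AS_with_total_shoot:
  assumes "\<alpha> \<noteq> 0" "shoot \<alpha> d p \<mu> (L + 2) = 0"
  shows "AS_with_total \<alpha> L d (\<Sum>j = 1..L + 1. shoot \<alpha> d p \<mu> j) (shoot \<alpha> d p \<mu>)"
  using assms shoot_equations[OF assms(1)] unfolding AS_with_total_def by simp

lemma AS_integral_sum_by_parts_const:
  assumes "l 0 = 0" "l (n + 1) = 0" "\<forall>j\<in>{1..n}. AS_integral \<alpha> \<phi> j = \<kappa>"
  shows "(\<Sum>j = 1..n. AS_integral \<alpha> l j * \<phi> j) = \<kappa> * (\<Sum>j = 1..n. l j) - \<alpha> * l n * \<phi> (n + 1) - \<alpha> * l 1 * \<phi> 0"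
proof -
  have "(\<Sum>j = 1..n. l j * AS_integral \<alpha> \<phi> j) = \<kappa> * (\<Sum>j = 1..n. l j)"
    using assms(3) by (simp add: sum_distrib_left mult.commute)
  then show ?thesis using AS_integral_sum_by_parts[of \<alpha> l \<phi> n] assms(1,2) by (simp add: algebra_simps)
qed

lemma sum_mult_step_function:
  fixes m \<phi> :: "nat \<Rightarrow> real"
  assumes "\<forall>j\<in>{1..n}. m j = \<mu> + (if k < j then 1 else 0)"
  shows "(\<Sum>j = 1..n. m j * \<phi> j) = \<mu> * (\<Sum>j = 1..n. \<phi> j) + (\<Sum>j = k + 1..n. \<phi> j)"
proof -
  have "(\<Sum>j = 1..n. m j * \<phi> j) = (\<Sum>j = 1..n. \<mu> * \<phi> j + (if k < j then \<phi> j else 0))"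
    using assms by (intro sum.cong) (auto simp: algebra_simps)
  also have "\<dots> = \<mu> * (\<Sum>j = 1..n. \<phi> j) + sum \<phi> ({1..n} \<inter> {j. k < j})"
    by (simp add: sum.distrib sum_distrib_left sum.inter_restrict)
  also have "{1..n} \<inter> {j. k < j} = {k + 1..n}" by auto
  finally show ?thesis .
qed

lemma AS_homogeneous_initial_zero:
  fixes l :: "nat \<Rightarrow> real" and j :: nat
  assumes "\<alpha> \<noteq> 0" "l 0 = 0" "l 1 = 0" "l 2 = 0"
    and eqs: "\<forall>j\<in>{1..L}. 0 = - \<alpha> * l (j - 1) + l j - l (j + 1) + \<alpha> * l (j + 2)"
  shows "j \<le> L + 2 \<Longrightarrow> l j = 0"
proof (induction j rule: less_induct)
  case (less j)
  show ?case
  proof (cases "j \<le> 2")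
    case True
    then have "j = 0 \<or> j = 1 \<or> j = 2" by auto
    then show ?thesis using assms by auto
  next
    case False
    define i where "i = j - 2"
    have i: "i \<in> {1..L}" and j: "j = i + 2" using False less.prems unfolding i_def by auto
    then have "l (i - 1) = 0" "l i = 0" "l (i + 1) = 0" using less by auto
    then have "\<alpha> * l (i + 2) = 0" using eqs[rule_format, OF i] by simp
    then show ?thesis using j assms(1) by simp
  qed
qed

lemma singular_2x2_kernel:
  fixes a1 b1 a2 b2 :: real
  assumes "a1 * b2 - a2 * b1 = 0"
  obtains p q where "a1 * p + b1 * q = 0" "a2 * p + b2 * q = 0" "p \<noteq> 0 \<or> q \<noteq> 0"
proof (cases "a1 \<noteq> 0 \<or> b1 \<noteq> 0")
  case True
  show ?thesis by (rule that[of b1 "- a1"]) (use True assms in \<open>auto simp: algebra_simps\<close>)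
next
  case F: False
  show ?thesis
  proof (cases "a2 \<noteq> 0 \<or> b2 \<noteq> 0")
    case True
    show ?thesis by (rule that[of b2 "- a2"]) (use True F assms in \<open>auto simp: algebra_simps\<close>)
  next
    case False
    show ?thesis by (rule that[of 1 0]) (use False F in auto)
  qed
qed

lemma boundary_value_elimination:
  fixes c \<mu> A B n k sg S P R :: real
  assumes "\<mu> * S + P = - B * sg" "\<mu> * S + R = - A * sg" "n * \<mu> + (n - k) = - A - B" "c = \<mu> + 1 - B"
  shows "c * sg * (n * sg - 2 * S)
    = k * sg * (sg + P) + (n - k) * sg * (P - S) + (sg * (P + R - 2 * S) + S * (R - P))"
proof -
  have \<mu>: "\<mu> * (n * sg - 2 * S) = P + R - (n - k) * sg"
  proof -
    have "n * \<mu> * sg + (n - k) * sg = - A * sg - B * sg" using assms(3) by algebra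
    then show ?thesis using assms(1,2) by algebra
  qed
  have "c * sg * (n * sg - 2 * S) = (\<mu> * (n * sg - 2 * S)) * (sg + S) + (sg + P) * (n * sg - 2 * S)"
    using assms(1,4) by algebra
  then show ?thesis unfolding \<mu> by (simp add: algebra_simps)
qed

section \<open>Trigonometric estimates\<close>

lemma sin_arith_sum_telescope:
  fixes c y :: real
  assumes "a \<le> b"
  shows "2 * sin y * (\<Sum>j = a..<b. sin (c + 2 * real j * y))
    = cos (c + (2 * real a - 1) * y) - cos (c + (2 * real b - 1) * y)"
  using assms
proof (induction b rule: nat_induct_at_least)
  case base
  then show ?case by simp
next
  case (Suc b)
  have "c + (2 * real b - 1) * y = (c + 2 * real b * y) - y"
    "c + (2 * real (Suc b) - 1) * y = (c + 2 * real b * y) + y"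
    by (simp_all add: algebra_simps)
  then have "2 * sin y * sin (c + 2 * real b * y)
      = cos (c + (2 * real b - 1) * y) - cos (c + (2 * real (Suc b) - 1) * y)"
    by (simp only:) (simp add: cos_diff cos_add)
  then show ?case using Suc by (simp add: distrib_left)
qed

lemma sin_double_neg_and_cos_gap_pos:
  fixes x e :: real
  assumes "0 < e" "e < x" "3 * x < pi"
  shows "- sin (2 * e) < 0" "(cos x - cos (x + 2 * e)) / (2 * sin x) > 0"
proof -
  have "sin (2 * e) > 0" using assms by (intro sin_gt_zero) auto
  then show "- sin (2 * e) < 0" by simp
  have "sin x > 0" using assms by (intro sin_gt_zero) auto
  moreover have "cos (x + 2 * e) < cos x" using assms by (subst cos_mono_less_eq) auto
  ultimately show "(cos x - cos (x + 2 * e)) / (2 * sin x) > 0" by simp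
qed

text \<open>As a function of \<open>u\<close> the left-hand side is smallest at \<open>u = x\<close>.\<close>
lemma sin_sin_minus_sin_sin_cos_pos:
  fixes x e u :: real
  assumes e0: "0 < e" and ex: "e < x" and xu: "x \<le> u" and upi: "u + 2 * x + e \<le> pi"
    and x3: "3 * x < pi"
  shows "sin (x + e) * sin (x + e + u) - 2 * sin e * sin x * cos (x + e + u) > 0"
proof -
  define w where "w = x + e + u"
  have se: "sin e > 0" and sx: "sin x > 0" and sxe: "sin (x + e) > 0" and sw: "sin w > 0"
    using assms unfolding w_def by (auto intro!: sin_gt_zero)
  have at_min: "sin (x + e) * sin (2 * x + e) - 2 * sin e * sin x * cos (2 * x + e) > 0"
  proof -
    have "2 * (sin (x + e) * sin (2 * x + e) - 2 * sin e * sin x * cos (2 * x + e))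
        = (cos x - cos (3 * x)) + (cos x - cos (x + 2 * e))"
    proof -
      have "3 * x = x + x + x" by simp
      then show ?thesis
        using sin_cos_squared_add[of x] sin_cos_squared_add[of e]
        by (simp only: mult_2 sin_add cos_add) algebra
    qed
    moreover have "cos (3 * x) < cos x" "cos (x + 2 * e) < cos x"
      using assms by (subst cos_mono_less_eq; auto)+
    ultimately show ?thesis by argo
  qed
  show ?thesis
  proof (cases "cos w \<le> 0")
    case True
    then have "2 * sin e * sin x * cos w \<le> 0" using se sx by (simp add: mult_nonneg_nonpos)
    then show ?thesis using sxe sw unfolding w_def[symmetric] by (smt (verit) mult_pos_pos)
  next
    case False
    have "w \<le> pi / 2"
    proof (rule ccontr)
      assume "\<not> w \<le> pi / 2"
      then have "cos w \<le> cos (pi / 2)" using assms unfolding w_def by (subst cos_mono_le_eq) auto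
      then show False using False by simp
    qed
    then have "sin (2 * x + e) \<le> sin w" using assms unfolding w_def by (subst sin_mono_le_eq) auto
    then have "sin (x + e) * sin (2 * x + e) \<le> sin (x + e) * sin w"
      using sxe by (intro mult_left_mono) auto
    moreover have "cos w \<le> cos (2 * x + e)" using assms unfolding w_def by (subst cos_mono_le_eq) auto
    then have "2 * sin e * sin x * cos w \<le> 2 * sin e * sin x * cos (2 * x + e)"
      using se sx by (intro mult_left_mono) auto
    ultimately show ?thesis using at_min unfolding w_def[symmetric] by linarith
  qed
qed

text \<open>\<open>S\<close>, \<open>P\<close> and \<open>R\<close> are the closed forms of the sums \<open>sin_tail 0\<close>, \<open>sin_tail k\<close> and
  \<open>sin_tail_rev k\<close> below, with \<open>u = k x\<close> and \<open>e = \<pi> - (L + 2) x\<close>.\<close>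
lemma cross_term_pos:
  fixes x e u :: real
  assumes e0: "0 < e" and ex: "e < x" and xu: "x \<le> u" and upi: "u + 2 * x + e \<le> pi"
    and x3: "3 * x < pi"
  defines "sg \<equiv> - sin (2 * e)" and "S \<equiv> (cos x - cos (x + 2 * e)) / (2 * sin x)"
    and "P \<equiv> (cos (2 * u + x) - cos (x + 2 * e)) / (2 * sin x)"
    and "R \<equiv> (cos x - cos (x + 2 * e + 2 * u)) / (2 * sin x)"
  shows "sg * (P + R - 2 * S) + S * (R - P) > 0"
proof -
  define w where "w = x + e + u"
  define J where "J = sin (x + e) * sin w - 2 * sin e * sin x * cos w"
  have sx: "sin x > 0" and su: "sin u > 0" and se: "sin e > 0"
    using assms by (auto intro!: sin_gt_zero)
  have ce: "cos e > 0" using assms by (intro cos_gt_zero) auto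
  have J: "J > 0" unfolding J_def w_def using sin_sin_minus_sin_sin_cos_pos[OF assms(1-5)] .
  have trig: "cos (2 * u + x) + cos (x + 2 * e) - cos x - cos (x + 2 * e + 2 * u) = 4 * sin u * sin e * cos w"
    "cos x - cos (x + 2 * e + 2 * u) - cos (2 * u + x) + cos (x + 2 * e) = 4 * sin u * sin w * cos e"
    "cos x - cos (x + 2 * e) = 2 * sin (x + e) * sin e"
    unfolding w_def
    using sin_cos_squared_add[of x] sin_cos_squared_add[of e] sin_cos_squared_add[of u]
    by (simp_all only: mult_2 sin_add cos_add) algebra+
  have PRS: "P + R - 2 * S = 4 * sin u * sin e * cos w / (2 * sin x)"
    and RP: "R - P = 4 * sin u * sin w * cos e / (2 * sin x)"
    and S: "S = 2 * sin (x + e) * sin e / (2 * sin x)" and sg: "sg = - (2 * sin e * cos e)"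
    unfolding P_def R_def S_def sg_def sin_double using sx trig by (simp_all add: field_simps)
  have "sg * (P + R - 2 * S) + S * (R - P)
      = - (2 * sin e * cos e) * (4 * sin u * sin e * cos w / (2 * sin x))
        + 2 * sin (x + e) * sin e / (2 * sin x) * (4 * sin u * sin w * cos e / (2 * sin x))"
    unfolding PRS RP unfolding S sg ..
  also have "\<dots> = 8 * sin e * cos e * sin u * J / (2 * sin x)\<^sup>2"
    unfolding J_def using sx by (simp add: field_simps power2_eq_square)
  finally show ?thesis using se ce su J sx by simp
qed

lemma weighted_cross_term_pos:
  fixes x e u k n :: real
  assumes e0: "0 < e" and ex: "e < x" and xu: "x \<le> u" and upi: "u + 2 * x + e \<le> pi"
    and x3: "3 * x < pi" and k0: "0 \<le> k" and nk: "k \<le> n"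
  defines "sg \<equiv> - sin (2 * e)" and "S \<equiv> (cos x - cos (x + 2 * e)) / (2 * sin x)"
    and "P \<equiv> (cos (2 * u + x) - cos (x + 2 * e)) / (2 * sin x)"
    and "R \<equiv> (cos x - cos (x + 2 * e + 2 * u)) / (2 * sin x)"
  shows "k * sg * (sg + P) + (n - k) * sg * (P - S) + (sg * (P + R - 2 * S) + S * (R - P)) > 0"
proof -
  have sg: "sg < 0" and S: "S > 0"
    using sin_double_neg_and_cos_gap_pos[OF e0 ex x3] unfolding sg_def S_def by auto
  have sx: "sin x > 0" using assms by (intro sin_gt_zero) auto
  have "cos (2 * u + x) < cos (x + 2 * e)"
  proof (cases "2 * u + x \<le> pi")
    case True
    then show ?thesis using assms by (subst cos_mono_less_eq) auto
  next
    case False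
    have "cos (2 * u + x) = cos (2 * pi - (2 * u + x))" by simp
    also have "\<dots> < cos (x + 2 * e)" using assms False by (subst cos_mono_less_eq) auto
    finally show ?thesis .
  qed
  then have P: "P < 0" unfolding P_def using sx by (simp add: divide_neg_pos)
  have "sg * (sg + P) > 0" "sg * (P - S) > 0" using sg P S by (auto intro: mult_neg_neg)
  then have "k * sg * (sg + P) \<ge> 0" "(n - k) * sg * (P - S) \<ge> 0"
    using k0 nk by (simp_all add: mult.assoc)
  moreover have "sg * (P + R - 2 * S) + S * (R - P) > 0"
    unfolding sg_def S_def P_def R_def using cross_term_pos[OF assms(1-5)] .
  ultimately show ?thesis by linarith
qed

lemma cos_two_pi_div_nonneg:
  assumes "4 \<le> n"
  shows "cos (2 * pi / real n) \<ge> 0"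
proof (rule cos_ge_zero)
  have "2 * pi / real n \<le> 2 * pi / 4" using assms by (intro divide_left_mono) auto
  then show "2 * pi / real n \<le> pi / 2" by simp
  show "- (pi / 2) \<le> 2 * pi / real n" by (smt (verit) divide_nonneg_nonneg of_nat_0_le_iff pi_gt_zero)
qed

lemma alphaL_less_imp:
  assumes "2 \<le> L" "alphaL L < \<alpha>"
  shows "0 < \<alpha>" "(1 - \<alpha>) / (2 * \<alpha>) < cos (2 * pi / real (L + 2))"
proof -
  define C where "C = cos (2 * pi / real (L + 2))"
  have C: "C \<ge> 0" unfolding C_def using assms(1) by (intro cos_two_pi_div_nonneg) simp
  have "1 / (1 + 2 * C) < \<alpha>" using assms(2) unfolding alphaL_def C_def .
  then have "1 < \<alpha> * (1 + 2 * C)" using C by (simp add: divide_less_eq)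
  then show "0 < \<alpha>" using C by (smt (verit) mult_nonpos_nonneg)
  with \<open>1 < \<alpha> * (1 + 2 * C)\<close> show "(1 - \<alpha>) / (2 * \<alpha>) < C" by (simp add: field_simps)
qed

lemma less_alphaL_imp:
  assumes "2 \<le> L" "0 < \<alpha>" "\<alpha> < alphaL L"
  shows "cos (2 * pi / real (L + 2)) < (1 - \<alpha>) / (2 * \<alpha>)"
proof -
  define C where "C = cos (2 * pi / real (L + 2))"
  have C: "C \<ge> 0" unfolding C_def using assms(1) by (intro cos_two_pi_div_nonneg) simp
  have "\<alpha> < 1 / (1 + 2 * C)" using assms(3) unfolding alphaL_def C_def .
  then have "\<alpha> * (1 + 2 * C) < 1" using C by (simp add: less_divide_eq)
  then show "C < (1 - \<alpha>) / (2 * \<alpha>)" using assms(2) by (simp add: field_simps)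
qed

lemma exists_half_angle_of_alpha:
  assumes L: "1 \<le> L" and lo: "alphaL (L + 1) < \<alpha>" and hi: "L = 1 \<or> \<alpha> < alphaL L"
  obtains x where "\<alpha> * (1 + 2 * cos (2 * x)) = 1" "pi / real (L + 3) < x" "x < pi / real (L + 2)"
proof -
  define y where "y = (1 - \<alpha>) / (2 * \<alpha>)"
  have ap: "0 < \<alpha>" and y_lt: "y < cos (2 * pi / real (L + 3))"
    using alphaL_less_imp[of "L + 1" \<alpha>] L lo unfolding y_def by (simp_all add: add.assoc add.commute)
  have y_gt: "cos (2 * pi / real (L + 2)) < y"
  proof (cases "L = 1")
    case True
    have "cos (2 * pi / 3) < y" unfolding cos_120 y_def using ap by (simp add: field_simps)
    then show ?thesis using True by simp
  next
    case False
    then show ?thesis using less_alphaL_imp[of L \<alpha>] L hi ap unfolding y_def by simp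
  qed
  have "-1 \<le> y" "y \<le> 1" using y_lt y_gt cos_ge_minus_one cos_le_one by (smt (verit))+
  define \<omega> where "\<omega> = arccos y"
  have cw: "cos \<omega> = y" and w0: "0 \<le> \<omega>" and wpi: "\<omega> \<le> pi"
    unfolding \<omega>_def using \<open>-1 \<le> y\<close> \<open>y \<le> 1\<close> arccos_bounded by auto
  have "2 * pi / real (L + 3) < \<omega>"
  proof -
    have "2 * pi / real (L + 3) \<le> pi" by (simp add: field_simps)
    then show ?thesis using cos_mono_less_eq[of \<omega> "2 * pi / real (L + 3)"] cw y_lt w0 wpi by simp
  qed
  moreover have "\<omega> < 2 * pi / real (L + 2)"
  proof -
    have "2 * pi / real (L + 2) \<le> pi" by (simp add: field_simps)
    then show ?thesis using cos_mono_less_eq[of "2 * pi / real (L + 2)" \<omega>] cw y_gt w0 wpi by simp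
  qed
  moreover have "\<alpha> * (1 + 2 * cos (2 * (\<omega> / 2))) = 1" using cw ap unfolding y_def by (simp add: field_simps)
  ultimately show ?thesis by (intro that[of "\<omega> / 2"]) (simp_all add: field_simps)
qed

section \<open>Solutions in the admissible range of \<open>\<alpha>\<close>\<close>

locale AS_regime =
  fixes \<alpha> x :: real and L :: nat
  assumes L_pos: "1 \<le> L" and alpha_cos: "\<alpha> * (1 + 2 * cos (2 * x)) = 1"
    and x_gt: "pi / real (L + 3) < x" and x_lt: "x < pi / real (L + 2)"
begin

definition \<delta> :: real where "\<delta> = pi - real (L + 2) * x"

lemma angle_bounds: "0 < \<delta>" "\<delta> < x" "3 * x < pi" "0 < x" "0 < sin x"
proof -
  have "0 < pi / real (L + 3)" by simp
  then show x0: "0 < x" using x_gt by linarith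
  have "real (L + 2) * x < pi" using x_lt by (simp add: field_simps)
  then show \<delta>0: "0 < \<delta>" unfolding \<delta>_def by simp
  have "pi < real (L + 3) * x" using x_gt by (simp add: field_simps)
  then show "\<delta> < x" unfolding \<delta>_def by (simp add: algebra_simps)
  have "3 * x \<le> real (L + 2) * x" using L_pos x0 by (intro mult_right_mono) auto
  then show x3: "3 * x < pi" using \<delta>0 unfolding \<delta>_def by simp
  show "0 < sin x" using x0 x3 by (intro sin_gt_zero) auto
qed

lemma alpha_nonzero: "\<alpha> \<noteq> 0"
  using alpha_cos by auto

lemma sin_end_angle: "sin (2 * real (L + 2) * x) = - sin (2 * \<delta>)"
proof -
  have "2 * real (L + 2) * x = 2 * pi - 2 * \<delta>" unfolding \<delta>_def by (simp add: algebra_simps)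
  then show ?thesis by (simp add: sin_diff)
qed

definition sin_tail :: "nat \<Rightarrow> real" where
  "sin_tail k = (\<Sum>j = k + 1..L + 1. sin (2 * real j * x))"

definition sin_tail_rev :: "nat \<Rightarrow> real" where
  "sin_tail_rev k = (\<Sum>j = k + 1..L + 1. sin (2 * real (L + 2) * x - 2 * real j * x))"

lemma sin_tail_closed:
  assumes "k \<le> L + 1"
  shows "sin_tail k = (cos (2 * (real k * x) + x) - cos (x + 2 * \<delta>)) / (2 * sin x)"
proof -
  have tele: "2 * sin x * (\<Sum>j = k + 1..<L + 2. sin (0 + 2 * real j * x))
      = cos (0 + (2 * real (k + 1) - 1) * x) - cos (0 + (2 * real (L + 2) - 1) * x)"
    using assms by (intro sin_arith_sum_telescope) auto
  have "{k + 1..<L + 2} = {k + 1..L + 1}" by auto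
  moreover have "0 + (2 * real (k + 1) - 1) * x = 2 * (real k * x) + x" by (simp add: algebra_simps)
  moreover have "cos (0 + (2 * real (L + 2) - 1) * x) = cos (x + 2 * \<delta>)"
  proof -
    have "x + 2 * \<delta> = 2 * pi - (0 + (2 * real (L + 2) - 1) * x)" unfolding \<delta>_def by (simp add: algebra_simps)
    then show ?thesis by (simp only: cos_2pi_minus)
  qed
  ultimately have "2 * sin x * sin_tail k = cos (2 * (real k * x) + x) - cos (x + 2 * \<delta>)"
    using tele unfolding sin_tail_def by simp
  then show ?thesis using angle_bounds(5) by (simp add: field_simps)
qed

lemma sin_tail_rev_closed:
  assumes "k \<le> L + 1"
  shows "sin_tail_rev k = (cos x - cos (x + 2 * \<delta> + 2 * (real k * x))) / (2 * sin x)"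
proof -
  define c where "c = 2 * real (L + 2) * x"
  have tele: "2 * sin (- x) * (\<Sum>j = k + 1..<L + 2. sin (c + 2 * real j * (- x)))
      = cos (c + (2 * real (k + 1) - 1) * (- x)) - cos (c + (2 * real (L + 2) - 1) * (- x))"
    using assms by (intro sin_arith_sum_telescope) auto
  have "{k + 1..<L + 2} = {k + 1..L + 1}" by auto
  moreover have "c + (2 * real (L + 2) - 1) * (- x) = x" unfolding c_def by (simp add: algebra_simps)
  moreover have "cos (c + (2 * real (k + 1) - 1) * (- x)) = cos (x + 2 * \<delta> + 2 * (real k * x))"
  proof -
    have "x + 2 * \<delta> + 2 * (real k * x) = 2 * pi - (c + (2 * real (k + 1) - 1) * (- x))"
      unfolding \<delta>_def c_def by (simp add: algebra_simps)
    then show ?thesis by (simp only: cos_2pi_minus)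
  qed
  ultimately have "2 * sin x * sin_tail_rev k = cos x - cos (x + 2 * \<delta> + 2 * (real k * x))"
    using tele unfolding sin_tail_rev_def c_def by simp
  then show ?thesis using angle_bounds(5) by (simp add: field_simps)
qed

lemma sin_tail_rev_0: "sin_tail_rev 0 = sin_tail 0"
  by (simp add: sin_tail_closed sin_tail_rev_closed)

lemma sin_tail_0_pos: "sin_tail 0 > 0"
  using sin_double_neg_and_cos_gap_pos(2)[of \<delta> x] angle_bounds by (simp add: sin_tail_closed)

lemma AS_integral_weighted_sums:
  assumes "AS_with_total \<alpha> L d s l"
  shows "(\<Sum>j = 1..L + 1. AS_integral \<alpha> l j * sin (2 * real j * x)) = \<alpha> * l (L + 1) * sin (2 * \<delta>)"
    and "(\<Sum>j = 1..L + 1. AS_integral \<alpha> l j * sin (2 * real (L + 2) * x - 2 * real j * x))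
      = \<alpha> * l 1 * sin (2 * \<delta>)"
    and "(\<Sum>j = 1..L + 1. AS_integral \<alpha> l j) = (3 * \<alpha> - 1) * s - \<alpha> * l (L + 1) - \<alpha> * l 1"
proof -
  have l: "l 0 = 0" "l (L + 1 + 1) = 0" and s: "(\<Sum>j = 1..L + 1. l j) = s"
    using assms unfolding AS_with_total_def by auto
  have "AS_integral \<alpha> (\<lambda>j. sin (2 * real j * x)) j = 0" if "1 \<le> j" for j
    using AS_integral_sin_eq_0[OF alpha_cos that, of 0] by (simp add: mult_ac)
  then show "(\<Sum>j = 1..L + 1. AS_integral \<alpha> l j * sin (2 * real j * x)) = \<alpha> * l (L + 1) * sin (2 * \<delta>)"
    using AS_integral_sum_by_parts_const[OF l, of \<alpha> "\<lambda>j. sin (2 * real j * x)" 0] sin_end_angle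
    by (simp add: add.commute)
  have "\<alpha> * (1 + 2 * cos (- 2 * x)) = 1" using alpha_cos by simp
  then have "AS_integral \<alpha> (\<lambda>j. sin (2 * real (L + 2) * x - 2 * real j * x)) j = 0" if "1 \<le> j" for j
    using AS_integral_sin_eq_0[OF _ that, of \<alpha> "- 2 * x" "2 * real (L + 2) * x"] by (simp add: mult_ac)
  then show "(\<Sum>j = 1..L + 1. AS_integral \<alpha> l j * sin (2 * real (L + 2) * x - 2 * real j * x))
      = \<alpha> * l 1 * sin (2 * \<delta>)"
    using AS_integral_sum_by_parts_const[OF l, of \<alpha> "\<lambda>j. sin (2 * real (L + 2) * x - 2 * real j * x)" 0]
      sin_end_angle by (simp add: add.commute)
  have "AS_integral \<alpha> (\<lambda>_. 1) j = 3 * \<alpha> - 1" for j by (simp add: AS_integral_def)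
  then show "(\<Sum>j = 1..L + 1. AS_integral \<alpha> l j) = (3 * \<alpha> - 1) * s - \<alpha> * l (L + 1) - \<alpha> * l 1"
    using AS_integral_sum_by_parts_const[OF l, of \<alpha> "\<lambda>_. 1" "3 * \<alpha> - 1"] s by simp
qed

lemma unit_response_relations:
  fixes l :: "nat \<Rightarrow> real" and k :: nat
  assumes hs: "AS_with_total \<alpha> L (\<lambda>j. if j = k then 1 else 0) 0 l" and k: "1 \<le> k" "k \<le> L + 1"
  defines "\<mu> \<equiv> AS_integral \<alpha> l 1"
  shows "\<mu> * sin_tail 0 + sin_tail k = \<alpha> * l (L + 1) * sin (2 * \<delta>)"
    and "\<mu> * sin_tail 0 + sin_tail_rev k = \<alpha> * l 1 * sin (2 * \<delta>)"
    and "(real L + 1) * \<mu> + (real L + 1 - real k) = - \<alpha> * l 1 - \<alpha> * l (L + 1)"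
    and "AS_integral \<alpha> l (L + 1) = \<mu> + (if k \<le> L then 1 else 0)"
proof -
  have eqs: "\<forall>j\<in>{1..L}. (if j = k then 1 else 0) = - \<alpha> * l (j - 1) + l j - l (j + 1) + \<alpha> * l (j + 2)"
    using hs unfolding AS_with_total_def by auto
  have step: "\<forall>j\<in>{1..L + 1}. AS_integral \<alpha> l j = \<mu> + (if k < j then 1 else 0)"
  proof
    fix j assume j: "j \<in> {1..L + 1}"
    have "(\<Sum>i = 1..<j. if i = k then 1 else 0 :: real) = (if k < j then 1 else 0)"
      using k by simp
    then show "AS_integral \<alpha> l j = \<mu> + (if k < j then 1 else 0)"
      using AS_integral_eq_partial_sum[OF eqs j] unfolding \<mu>_def by simp
  qed
  note sums = AS_integral_weighted_sums[OF hs]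
  show "\<mu> * sin_tail 0 + sin_tail k = \<alpha> * l (L + 1) * sin (2 * \<delta>)"
    using sums(1) sum_mult_step_function[OF step, of "\<lambda>j. sin (2 * real j * x)"]
    by (simp add: sin_tail_def)
  show "\<mu> * sin_tail 0 + sin_tail_rev k = \<alpha> * l 1 * sin (2 * \<delta>)"
    using sums(2) sum_mult_step_function[OF step, of "\<lambda>j. sin (2 * real (L + 2) * x - 2 * real j * x)"]
    by (simp add: sin_tail_rev_def flip: sin_tail_rev_0)
  show "(real L + 1) * \<mu> + (real L + 1 - real k) = - \<alpha> * l 1 - \<alpha> * l (L + 1)"
    using sums(3) sum_mult_step_function[OF step, of "\<lambda>_. 1"] k by (simp add: of_nat_diff algebra_simps)
  show "AS_integral \<alpha> l (L + 1) = \<mu> + (if k \<le> L then 1 else 0)"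
    using step by auto
qed

lemma AS_with_total_homogeneous_eq_0:
  assumes hs: "AS_with_total \<alpha> L (\<lambda>_. 0) 0 l" and j: "j \<le> L + 2"
  shows "l j = 0"
proof -
  define \<mu> where "\<mu> = AS_integral \<alpha> l 1"
  have "AS_with_total \<alpha> L (\<lambda>j. if j = L + 1 then 1 else 0) 0 l" using hs by (rule AS_with_total_cong) auto
  note rel = unit_response_relations[OF this, folded \<mu>_def]
  have "sin_tail (L + 1) = 0" "sin_tail_rev (L + 1) = 0" by (simp_all add: sin_tail_def sin_tail_rev_def)
  then have e1: "\<mu> * sin_tail 0 = \<alpha> * l (L + 1) * sin (2 * \<delta>)"
    and e2: "\<mu> * sin_tail 0 = \<alpha> * l 1 * sin (2 * \<delta>)"
    and e3: "(real L + 1) * \<mu> = - \<alpha> * l 1 - \<alpha> * l (L + 1)"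
    using rel by auto
  have s2: "sin (2 * \<delta>) > 0" and S: "sin_tail 0 > 0"
    using sin_double_neg_and_cos_gap_pos(1)[of \<delta> x] angle_bounds sin_tail_0_pos by auto
  have "\<mu> * ((real L + 1) * sin (2 * \<delta>) + 2 * sin_tail 0) = 0"
    using e1 e2 e3 by algebra
  moreover have "(real L + 1) * sin (2 * \<delta>) + 2 * sin_tail 0 > 0" using s2 S by (simp add: add_pos_pos)
  ultimately have \<mu>0: "\<mu> = 0" by simp
  then have l1: "l 1 = 0" using e2 s2 alpha_nonzero by simp
  have l0: "l 0 = 0" and eqs: "\<forall>j\<in>{1..L}. 0 = - \<alpha> * l (j - 1) + l j - l (j + 1) + \<alpha> * l (j + 2)"
    using hs unfolding AS_with_total_def by auto
  have l2: "l 2 = 0" using \<mu>0 l0 l1 alpha_nonzero unfolding \<mu>_def AS_integral_def by (simp add: numeral_2_eq_2)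
  show ?thesis using AS_homogeneous_initial_zero[OF alpha_nonzero l0 l1 l2 eqs j] .
qed

lemma unit_response_boundary_pos:
  fixes l :: "nat \<Rightarrow> real" and k :: nat
  assumes hs: "AS_with_total \<alpha> L (\<lambda>j. if j = k then 1 else 0) 0 l" and k: "k \<in> {1..L}"
  shows "\<alpha> * l L - l (L + 1) > 0"
proof -
  define sg where "sg = - sin (2 * \<delta>)"
  define S where "S = (cos x - cos (x + 2 * \<delta>)) / (2 * sin x)"
  define P where "P = (cos (2 * (real k * x) + x) - cos (x + 2 * \<delta>)) / (2 * sin x)"
  define R where "R = (cos x - cos (x + 2 * \<delta> + 2 * (real k * x))) / (2 * sin x)"
  define \<mu> where "\<mu> = AS_integral \<alpha> l 1"
  define A where "A = \<alpha> * l 1"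
  define B where "B = \<alpha> * l (L + 1)"
  define n where "n = real L + 1"
  define c where "c = \<alpha> * l L - l (L + 1)"
  have "sin_tail 0 = S" "sin_tail k = P" "sin_tail_rev k = R"
    using k unfolding S_def P_def R_def by (simp_all add: sin_tail_closed sin_tail_rev_closed)
  then have e1: "\<mu> * S + P = - B * sg" and e2: "\<mu> * S + R = - A * sg"
    and e3: "n * \<mu> + (n - real k) = - A - B" and e4: "AS_integral \<alpha> l (L + 1) = \<mu> + 1"
    using unit_response_relations[OF hs, folded \<mu>_def] k
    unfolding sg_def A_def B_def n_def by (auto simp: algebra_simps)
  have "l (L + 2) = 0" using hs unfolding AS_with_total_def by auto
  then have cv: "c = \<mu> + 1 - B" using e4 unfolding c_def B_def AS_integral_def by (simp add: algebra_simps)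
  have "c * sg * (n * sg - 2 * S)
      = real k * sg * (sg + P) + (n - real k) * sg * (P - S) + (sg * (P + R - 2 * S) + S * (R - P))"
    using boundary_value_elimination[OF e1 e2 e3 cv] .
  also have "\<dots> > 0"
  proof -
    have "x \<le> real k * x" "real k * x \<le> real L * x" using k angle_bounds by (auto intro: mult_right_mono)
    then show ?thesis
      unfolding sg_def S_def P_def R_def using k angle_bounds
      by (intro weighted_cross_term_pos) (auto simp: \<delta>_def n_def algebra_simps)
  qed
  finally have pos: "c * (sg * (n * sg - 2 * S)) > 0" by (simp add: mult.assoc)
  have "sg < 0" "S > 0"
    using sin_double_neg_and_cos_gap_pos[of \<delta> x] angle_bounds unfolding sg_def S_def by auto
  moreover have "n > 0" unfolding n_def by simp
  ultimately have "n * sg - 2 * S < 0" by (smt (verit) mult_pos_neg)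
  with \<open>sg < 0\<close> have "sg * (n * sg - 2 * S) > 0" by (rule mult_neg_neg)
  with pos have "c > 0" by (simp add: zero_less_mult_iff)
  then show ?thesis unfolding c_def .
qed

lemma shooting_determinant_nonzero:
  defines "U \<equiv> shoot \<alpha> (\<lambda>_. 0) 1 0" and "V \<equiv> shoot \<alpha> (\<lambda>_. 0) 0 1"
  shows "U (L + 2) * (\<Sum>j = 1..L + 1. V j) - (\<Sum>j = 1..L + 1. U j) * V (L + 2) \<noteq> 0"
proof
  assume "U (L + 2) * (\<Sum>j = 1..L + 1. V j) - (\<Sum>j = 1..L + 1. U j) * V (L + 2) = 0"
  then obtain p q where pq: "U (L + 2) * p + V (L + 2) * q = 0"
    "(\<Sum>j = 1..L + 1. U j) * p + (\<Sum>j = 1..L + 1. V j) * q = 0" "p \<noteq> 0 \<or> q \<noteq> 0"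
    by (rule singular_2x2_kernel)
  define l where "l = shoot \<alpha> (\<lambda>_. 0) p q"
  have lin: "l j = p * U j + q * V j" for j
    unfolding l_def U_def V_def using shoot_linear[of \<alpha> "\<lambda>_. 0" p q j] shoot_zero by simp
  have "AS_with_total \<alpha> L (\<lambda>_. 0) (\<Sum>j = 1..L + 1. l j) l"
    unfolding l_def using pq(1) lin[of "L + 2"]
    by (intro AS_with_total_shoot[OF alpha_nonzero]) (simp add: l_def mult.commute)
  moreover have "(\<Sum>j = 1..L + 1. l j) = (\<Sum>j = 1..L + 1. U j) * p + (\<Sum>j = 1..L + 1. V j) * q"
    unfolding lin sum.distrib sum_distrib_left[symmetric] by (simp add: mult.commute)
  then have "(\<Sum>j = 1..L + 1. l j) = 0" using pq(2) by simp
  ultimately have "AS_with_total \<alpha> L (\<lambda>_. 0) 0 l" by simp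
  then have "l 1 = 0" "l 2 = 0" using AS_with_total_homogeneous_eq_0 by auto
  then show False using pq(3) alpha_nonzero unfolding l_def by (simp add: numeral_2_eq_2)
qed

lemma AS_with_total_exists: "\<exists>l. AS_with_total \<alpha> L d s l"
proof -
  define U where "U = shoot \<alpha> (\<lambda>_. 0) 1 0"
  define V where "V = shoot \<alpha> (\<lambda>_. 0) 0 1"
  define W where "W = shoot \<alpha> d 0 0"
  define a1 b1 c1 where "a1 = U (L + 2)" and "b1 = V (L + 2)" and "c1 = W (L + 2)"
  define a2 b2 c2 where "a2 = (\<Sum>j = 1..L + 1. U j)" and "b2 = (\<Sum>j = 1..L + 1. V j)"
    and "c2 = (\<Sum>j = 1..L + 1. W j)"
  define D where "D = a1 * b2 - a2 * b1"
  have D: "D \<noteq> 0"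
    using shooting_determinant_nonzero unfolding D_def a1_def b1_def a2_def b2_def U_def V_def .
  define p where "p = (- c1 * b2 - (s - c2) * b1) / D"
  define q where "q = (a1 * (s - c2) + a2 * c1) / D"
  have "p * D = - c1 * b2 - (s - c2) * b1" "q * D = a1 * (s - c2) + a2 * c1"
    using D unfolding p_def q_def by simp_all
  then have "(p * a1 + q * b1 + c1) * D = 0" "(p * a2 + q * b2 + c2 - s) * D = 0"
    unfolding D_def by algebra+
  then have cramer: "p * a1 + q * b1 + c1 = 0" "p * a2 + q * b2 + c2 = s" using D by simp_all
  define l where "l = shoot \<alpha> d p q"
  have lin: "l j = p * U j + q * V j + W j" for j
    unfolding l_def U_def V_def W_def by (rule shoot_linear)
  have "(\<Sum>j = 1..L + 1. l j) = p * a2 + q * b2 + c2"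
    unfolding lin sum.distrib sum_distrib_left[symmetric] a2_def b2_def c2_def ..
  then have "l (L + 2) = 0" "(\<Sum>j = 1..L + 1. l j) = s"
    using cramer unfolding lin a1_def b1_def c1_def by simp_all
  then show ?thesis using AS_with_total_shoot[OF alpha_nonzero, of d p q L] unfolding l_def by auto
qed

definition sol :: "(nat \<Rightarrow> real) \<Rightarrow> real \<Rightarrow> nat \<Rightarrow> real" where
  "sol d s = (SOME l. AS_with_total \<alpha> L d s l)"

lemma AS_with_total_sol: "AS_with_total \<alpha> L d s (sol d s)"
  unfolding sol_def using AS_with_total_exists by (rule someI_ex)

lemma AS_with_total_unique:
  assumes "AS_with_total \<alpha> L d s l" "j \<le> L + 2"
  shows "l j = sol d s j"
proof -
  have "AS_with_total \<alpha> L (\<lambda>_. 0) 0 (\<lambda>j. l j - sol d s j)"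
    using AS_with_total_diff[OF assms(1) AS_with_total_sol[of d s]] by simp
  from AS_with_total_homogeneous_eq_0[OF this assms(2)] show ?thesis by simp
qed

definition unit_response :: "nat \<Rightarrow> nat \<Rightarrow> real" where
  "unit_response k = sol (\<lambda>j. if j = k then 1 else 0) 0"

lemma AS_with_total_unit_response:
  "AS_with_total \<alpha> L (\<lambda>j. if j = k then 1 else 0) 0 (unit_response k)"
  unfolding unit_response_def by (rule AS_with_total_sol)

definition boundary_coeff :: "nat \<Rightarrow> real" where
  "boundary_coeff k = \<alpha> * unit_response k L - unit_response k (L + 1)"

lemma boundary_coeff_pos: "k \<in> {1..L} \<Longrightarrow> boundary_coeff k > 0"
  unfolding boundary_coeff_def using AS_with_total_unit_response by (rule unit_response_boundary_pos)

lemma sol_decomposition: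
  assumes "j \<le> L + 2"
  shows "sol d s j = sol (\<lambda>_. 0) s j + (\<Sum>k = 1..L. d k * unit_response k j)"
proof -
  have "AS_with_total \<alpha> L (\<lambda>j. \<Sum>k\<in>{1..L}. d k * (if j = k then 1 else 0)) (\<Sum>k\<in>{1..L}. d k * 0)
      (\<lambda>j. \<Sum>k\<in>{1..L}. d k * unit_response k j)"
    using AS_with_total_scale[OF AS_with_total_unit_response] by (intro AS_with_total_sum) auto
  from AS_with_total_add[OF AS_with_total_sol[of "\<lambda>_. 0" s] this]
  have "AS_with_total \<alpha> L (\<lambda>j. \<Sum>k = 1..L. d k * (if j = k then 1 else 0)) s
      (\<lambda>j. sol (\<lambda>_. 0) s j + (\<Sum>k = 1..L. d k * unit_response k j))"
    by simp
  then have "AS_with_total \<alpha> L d s (\<lambda>j. sol (\<lambda>_. 0) s j + (\<Sum>k = 1..L. d k * unit_response k j))"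
    by (rule AS_with_total_cong) (simp add: if_distrib cong: if_cong)
  then show ?thesis using AS_with_total_unique assms by metis
qed

lemma sol_homogeneous_reflect:
  assumes "j \<le> L + 2"
  shows "sol (\<lambda>_. 0) s (L + 2 - j) = sol (\<lambda>_. 0) s j"
proof -
  have "AS_with_total \<alpha> L (\<lambda>_. 0) s (\<lambda>j. sol (\<lambda>_. 0) s (L + 2 - j))"
    using AS_with_total_reflect[OF AS_with_total_sol, of "\<lambda>_. 0" s] by simp
  then show ?thesis using AS_with_total_unique assms by blast
qed

lemma unit_response_reflect:
  assumes k: "k \<in> {1..L}" and j: "j \<le> L + 2"
  shows "unit_response k (L + 2 - j) = - unit_response (L + 1 - k) j"
proof -
  define d where "d = (\<lambda>j. - (if j = L + 1 - k then 1 else 0 :: real))"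
  have "AS_with_total \<alpha> L (\<lambda>j. - (if L + 1 - j = k then 1 else 0)) 0 (\<lambda>j. unit_response k (L + 2 - j))"
    using AS_with_total_reflect[OF AS_with_total_unit_response] .
  then have "AS_with_total \<alpha> L d 0 (\<lambda>j. unit_response k (L + 2 - j))"
    by (rule AS_with_total_cong) (use k in \<open>auto simp: d_def\<close>)
  moreover have "AS_with_total \<alpha> L d 0 (\<lambda>j. - unit_response (L + 1 - k) j)"
    using AS_with_total_scale[OF AS_with_total_unit_response, of "-1"] unfolding d_def by simp
  ultimately show ?thesis using AS_with_total_unique[of d 0, OF _ j] by metis
qed

lemma d0L_eq: "d0L \<alpha> L = - sol (\<lambda>_. 0) 1 1 + \<alpha> * sol (\<lambda>_. 0) 1 2"
  unfolding d0L_def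
proof (rule the_equality)
  show "\<exists>l. AS \<alpha> L (\<lambda>_. 0) l \<and> - sol (\<lambda>_. 0) 1 1 + \<alpha> * sol (\<lambda>_. 0) 1 2 = - l 1 + \<alpha> * l 2"
    using AS_with_total_sol unfolding AS_iff_AS_with_total by blast
next
  fix v assume "\<exists>l. AS \<alpha> L (\<lambda>_. 0) l \<and> v = - l 1 + \<alpha> * l 2"
  then show "v = - sol (\<lambda>_. 0) 1 1 + \<alpha> * sol (\<lambda>_. 0) 1 2"
    using AS_with_total_unique L_pos unfolding AS_iff_AS_with_total by force
qed

lemma right_boundary_value:
  "- \<alpha> * sol d 1 L + sol d 1 (L + 1) = - d0L \<alpha> L - (\<Sum>k = 1..L. boundary_coeff k * d k)"
proof -
  have "sol (\<lambda>_. 0) 1 L = sol (\<lambda>_. 0) 1 2" "sol (\<lambda>_. 0) 1 (L + 1) = sol (\<lambda>_. 0) 1 1"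
    using sol_homogeneous_reflect[of 2 1] sol_homogeneous_reflect[of "L + 1" 1] by auto
  then show ?thesis
    using sol_decomposition[of L d 1] sol_decomposition[of "L + 1" d 1] unfolding d0L_eq boundary_coeff_def
    by (simp add: algebra_simps sum_distrib_left sum_subtractf sum.distrib sum_negf)
qed

lemma left_boundary_value:
  "- sol d 1 1 + \<alpha> * sol d 1 2 = d0L \<alpha> L - (\<Sum>k = 1..L. boundary_coeff (L + 1 - k) * d k)"
proof -
  have "boundary_coeff (L + 1 - k) = - \<alpha> * unit_response k 2 + unit_response k 1" if "k \<in> {1..L}" for k
    using unit_response_reflect[OF that, of L] unit_response_reflect[OF that, of "L + 1"]
    unfolding boundary_coeff_def by simp
  then have "(\<Sum>k = 1..L. boundary_coeff (L + 1 - k) * d k)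
      = (\<Sum>k = 1..L. (- \<alpha> * unit_response k 2 + unit_response k 1) * d k)"
    by (intro sum.cong) auto
  then show ?thesis
    using sol_decomposition[of 1 d 1] sol_decomposition[of 2 d 1] unfolding d0L_eq
    by (simp add: algebra_simps sum_distrib_left sum_subtractf sum.distrib sum_negf)
qed

end

theorem mainTheorem9:
  fixes L :: nat and \<alpha> :: real
  assumes "L \<ge> 1"
    and "alphaL (L + 1) < \<alpha>"
    and "L = 1 \<or> \<alpha> < alphaL L"
  shows "\<exists>c :: nat \<Rightarrow> real. (\<forall>k\<in>{1..L}. c k > 0) \<and>
    (\<forall>d :: nat \<Rightarrow> real. \<exists>l. AS \<alpha> L d l \<and>
        (\<forall>l'. AS \<alpha> L d l' \<longrightarrow> (\<forall>j\<le>L + 2. l' j = l j)) \<and>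
        - \<alpha> * l L + l (L + 1) = - d0L \<alpha> L - (\<Sum>k = 1..L. c k * d k) \<and>
        - l 1 + \<alpha> * l 2 = d0L \<alpha> L - (\<Sum>k = 1..L. c (L + 1 - k) * d k))"
proof -
  obtain x where "\<alpha> * (1 + 2 * cos (2 * x)) = 1" "pi / real (L + 3) < x" "x < pi / real (L + 2)"
    using exists_half_angle_of_alpha assms by blast
  then interpret AS_regime \<alpha> x L using assms(1) by unfold_locales
  show ?thesis
  proof (rule exI[of _ boundary_coeff], intro conjI allI ballI boundary_coeff_pos)
    fix d :: "nat \<Rightarrow> real"
    show "\<exists>l. AS \<alpha> L d l \<and> (\<forall>l'. AS \<alpha> L d l' \<longrightarrow> (\<forall>j\<le>L + 2. l' j = l j)) \<and>
        - \<alpha> * l L + l (L + 1) = - d0L \<alpha> L - (\<Sum>k = 1..L. boundary_coeff k * d k) \<and>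
        - l 1 + \<alpha> * l 2 = d0L \<alpha> L - (\<Sum>k = 1..L. boundary_coeff (L + 1 - k) * d k)"
      using AS_with_total_sol AS_with_total_unique right_boundary_value left_boundary_value
      unfolding AS_iff_AS_with_total by blast
  qed
qed

end
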